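(* Let $Q\subseteq V$ be a polyhedron, $F$ a face of $Q$, and $v\in V$. Then the function $\overline{j}_{C_F+v}:\mathrm{Def}^+(Q)\to\mathbb Z$ defined by $\overline{j}_{C_F+v}(P)=1$ if $C_F+v$ tightly contains $P$ and $\overline{j}_{C_F+v}(P)=0$ otherwise, is valuative on $\mathrm{Def}^+(Q)$ (equivalently, it extends to a $\mathbb Z$-linear map $\mathbb I(\mathrm{Def}^+(Q))\to\mathbb Z$).
   Context: $V$ is a finite-dimensional real vector space with inner product $\langle\cdot,\cdot\rangle$. For a polyhedron $P\subseteq V$, $\mathbf 1_P:V\to\mathbb Z$ is its indicator function. For a family $\mathscr P$ of polyhedra, the indicator group $\mathbb I(\mathscr P)$ is the $\mathbb Z$-submodule of $\mathbb Z^V$ spanned by $\{\mathbf 1_P: P\in\mathscr P\}$. A function $f:\mathscr P\to A$ to an abelian group is valuative (a valuation) if $\sum_i a_i f(P_i)=0$ whenever $\sum_i a_i\mathbf 1_{P_i}=0$ with $a_i\in\mathbb Z$, $P_i\in\mathscr P$ (equivalently, $f$ extends to a $\mathbb Z$-linear map on $\mathbb I(\mathscr P)$). For a polyhedron $Q$, $\Sigma_Q$ is its outer normal fan; for a face $F$, $\sigma_F\in\Sigma_Q$ is the cone of linear functionals attaining their maximum on $Q$ exactly on $F$; the tangent cone of $Q$ at $F$ is $C_F=\sigma_F^\vee=\mathrm{Cone}(v'-v\mid v\in F, v'\in Q)$. A polyhedron $P$ is an extended deformation of $Q$ if each cone of $\Sigma_P$ is a union of cones of $\Sigma_Q$; $\mathrm{Def}^+(Q)$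 denotes the set of all extended deformations of $Q$. For a cone $C$, $\mathrm{lineal}(C)$ is its lineality space (the maximal linear subspace contained in $C$). A translate $C+v$ tightly contains a polyhedron $P$ if $P\subseteq C+v$ and $P\cap(\mathrm{lineal}(C)+v)\neq\emptyset$. *)

theory Defs
  imports "HOL-Analysis.Analysis"
begin

text \<open>Faces of a polyhedron are taken to be nonempty (paper convention).
  Linear functionals on V are identified with vectors via the inner product.\<close>

definition normal_cone :: "'a::euclidean_space set \<Rightarrow> 'a set \<Rightarrow> 'a set" where
  "normal_cone Q F = {u. {x \<in> Q. \<forall>y \<in> Q. u \<bullet> y \<le> u \<bullet> x} = F}"

definition normal_fan :: "'a::euclidean_space set \<Rightarrow> 'a set set" where
  "normal_fan Q = {normal_cone Q F | F. F face_of Q \<and> F \<noteq> {}}"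

definition tangent_cone :: "'a::euclidean_space set \<Rightarrow> 'a set \<Rightarrow> 'a set" where
  "tangent_cone Q F = convex_cone hull {v' - v | v v'. v \<in> F \<and> v' \<in> Q}"

definition ext_deformations :: "'a::euclidean_space set \<Rightarrow> 'a set set" where
  "ext_deformations Q = {P. polyhedron P \<and> P \<noteq> {} \<and>
      (\<forall>\<sigma> \<in> normal_fan P. \<exists>S. S \<subseteq> normal_fan Q \<and> \<sigma> = \<Union>S)}"

definition lineal :: "'a::euclidean_space set \<Rightarrow> 'a set" where
  "lineal C = (THE L. subspace L \<and> L \<subseteq> C \<and> (\<forall>M. subspace M \<and> M \<subseteq> C \<longrightarrow> M \<subseteq> L))"

definition tightly_contains :: "'a::euclidean_space set \<Rightarrow> 'a \<Rightarrow> 'a set \<Rightarrow> bool" where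
  "tightly_contains C v P \<longleftrightarrow> P \<subseteq> (\<lambda>x. x + v) ` C \<and> P \<inter> ((\<lambda>x. x + v) ` lineal C) \<noteq> {}"

definition valuative :: "'a set set \<Rightarrow> ('a set \<Rightarrow> 'b::comm_ring_1) \<Rightarrow> bool" where
  "valuative \<P> f \<longleftrightarrow>
     (\<forall>ps :: ('a set \<times> int) list.
        (\<forall>(P, a) \<in> set ps. P \<in> \<P>) \<longrightarrow>
        (\<forall>x. (\<Sum>(P, a) \<leftarrow> ps. a * indicator P x) = (0::int)) \<longrightarrow>
        (\<Sum>(P, a) \<leftarrow> ps. of_int a * f P) = 0)"

end

theory Submission
  imports Defs
begin

text \<open>Fix \<open>u\<^sub>0 \<in> \<sigma>\<^sub>F\<close>. For an extended deformation \<open>P\<close> of \<open>Q\<close> the face \<open>P\<^sup>u\<close> maximising \<open>u\<close>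
  is, once nonempty, the same for all \<open>u \<in> \<sigma>\<^sub>F\<close>; as \<open>C\<^sub>F\<close> is the polar of \<open>\<sigma>\<^sub>F\<close>, it follows that \<open>C\<^sub>F + v\<close>
  tightly contains \<open>P\<close> iff \<open>P\<^sup>u\<^sup>0\<close> meets the affine space \<open>A = v + lineal C\<^sub>F\<close>. So \<open>j\<close> is the
  composite of \<open>P \<mapsto> P\<^sup>u\<^sup>0\<close>, which preserves linear relations among indicator functions of
  polyhedra, with the valuation \<open>P \<mapsto> [P \<inter> A \<noteq> {}]\<close>.

  For the latter, induct on \<open>dim A\<close>: intersecting with the lines of \<open>A\<close> in one direction
  (after projecting along the others, which keeps polyhedra polyhedral by Fourier--Motzkin) reduces it to
  the line, where nonemptiness of a closed interval is read off from indicator values: at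
  \<open>-\<infinity>\<close> if it is unbounded below, and as \<open>\<one>\<^sub>I(m) - \<one>\<^sub>I(m - \<epsilon>)\<close> at its left endpoint \<open>m\<close> otherwise.
  For the face map, \<open>\<one>\<^bsub>P\<^sup>u\<^esub>(x) = \<one>\<^sub>P(x) - [T\<^sub>x P \<inter> {u \<bullet> z \<ge> 1} \<noteq> {}]\<close>, where the cone \<open>T\<^sub>x P\<close> of
  feasible directions at \<open>x\<close> is polyhedral and its indicator is a pointwise limit of \<open>z \<mapsto> \<one>\<^sub>P(x + \<epsilon>z)\<close>.\<close>

section \<open>Valuations\<close>

lemma valuativeI:
  assumes "\<And>ps. \<forall>(P, a) \<in> set ps. P \<in> \<P> \<Longrightarrow> (\<And>x. (\<Sum>(P, a) \<leftarrow> ps. a * indicator P x) = (0::int))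
             \<Longrightarrow> (\<Sum>(P, a) \<leftarrow> ps. a * f P) = (0::int)"
  shows "valuative \<P> f"
  using assms by (simp add: valuative_def)

lemma valuativeD:
  assumes "valuative \<P> f" "\<forall>(P, a) \<in> set ps. P \<in> \<P>"
    and "\<And>x. (\<Sum>(P, a) \<leftarrow> ps. a * indicator P x) = (0::int)"
  shows "(\<Sum>(P, a) \<leftarrow> ps. a * f P) = (0::int)"
  using assms by (simp add: valuative_def)

lemma sum_list_weighted_cong:
  assumes "\<And>P a. (P, a) \<in> set ps \<Longrightarrow> f P = g P"
  shows "(\<Sum>(P, a) \<leftarrow> ps. a * f P) = (\<Sum>(P, a) \<leftarrow> ps. (a::int) * g P)"
  using assms by (intro arg_cong[where f = sum_list] map_cong) auto

lemma valuative_cong: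
  assumes "\<And>P. P \<in> \<P> \<Longrightarrow> f P = g P"
  shows "valuative \<P> f \<longleftrightarrow> valuative \<P> (g :: _ \<Rightarrow> int)"
proof -
  have "(\<Sum>(P, a) \<leftarrow> ps. a * f P) = (\<Sum>(P, a) \<leftarrow> ps. a * g P)" if "\<forall>(P, a) \<in> set ps. P \<in> \<P>" for ps
    using that assms by (intro sum_list_weighted_cong) auto
  then show ?thesis by (auto simp: valuative_def)
qed

lemma valuative_subset: "valuative \<P> f \<Longrightarrow> \<P>' \<subseteq> \<P> \<Longrightarrow> valuative \<P>' f"
  by (fastforce simp: valuative_def)

lemma valuative_indicator: "valuative \<P> (\<lambda>P. indicator P x :: int)"
  by (rule valuativeI)

lemma valuative_diff:
  assumes "valuative \<P> f" "valuative \<P> g"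
  shows "valuative \<P> (\<lambda>P. f P - g P :: int)"
proof (rule valuativeI)
  fix ps
  assume "\<forall>(P, a) \<in> set ps. P \<in> \<P>" "\<And>x. (\<Sum>(P, a) \<leftarrow> ps. a * indicator P x) = (0::int)"
  with assms have "(\<Sum>(P, a) \<leftarrow> ps. a * f P) - (\<Sum>(P, a) \<leftarrow> ps. a * g P) = 0"
    by (simp add: valuativeD)
  moreover have "(\<Sum>(P, a) \<leftarrow> ps. a * (f P - g P)) =
      (\<Sum>(P, a) \<leftarrow> ps. a * f P) - (\<Sum>(P, a) \<leftarrow> ps. a * g P)"
    by (induction ps) (auto simp: algebra_simps)
  ultimately show "(\<Sum>(P, a) \<leftarrow> ps. a * (f P - g P)) = 0" by simp
qed

lemma valuative_const_mult:
  assumes "valuative \<P> f"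
  shows "valuative \<P> (\<lambda>P. c * f P :: int)"
proof (rule valuativeI)
  fix ps
  assume "\<forall>(P, a) \<in> set ps. P \<in> \<P>" "\<And>x. (\<Sum>(P, a) \<leftarrow> ps. a * indicator P x) = (0::int)"
  with assms have "c * (\<Sum>(P, a) \<leftarrow> ps. a * f P) = 0" by (simp add: valuativeD)
  moreover have "(\<Sum>(P, a) \<leftarrow> ps. a * (c * f P)) = c * (\<Sum>(P, a) \<leftarrow> ps. a * f P)"
    by (induction ps) (auto simp: algebra_simps)
  ultimately show "(\<Sum>(P, a) \<leftarrow> ps. a * (c * f P)) = 0" by simp
qed

lemma valuative_add:
  assumes "valuative \<P> f" "valuative \<P> g"
  shows "valuative \<P> (\<lambda>P. f P + g P :: int)"
  using valuative_diff[OF assms(1) valuative_const_mult[OF assms(2), of "- 1"]] by simp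

lemma valuative_comp:
  assumes "g ` \<P> \<subseteq> \<Q>" "\<And>x. valuative \<P> (\<lambda>P. indicator (g P) x :: int)" "valuative \<Q> f"
  shows "valuative \<P> (\<lambda>P. f (g P) :: int)"
proof (rule valuativeI)
  fix ps
  assume ps: "\<forall>(P, a) \<in> set ps. P \<in> \<P>" "\<And>x. (\<Sum>(P, a) \<leftarrow> ps. a * indicator P x) = (0::int)"
  define qs where "qs = map (\<lambda>(P, a). (g P, a)) ps"
  have sum_qs: "(\<Sum>(R, a) \<leftarrow> qs. a * h R) = (\<Sum>(P, a) \<leftarrow> ps. a * h (g P))" for h :: "_ \<Rightarrow> int"
    unfolding qs_def by (induction ps) auto
  have "\<forall>(R, a) \<in> set qs. R \<in> \<Q>" using ps(1) assms(1) by (fastforce simp: qs_def)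
  moreover have "(\<Sum>(R, a) \<leftarrow> qs. a * indicator R x) = (0::int)" for x
    unfolding sum_qs using assms(2) ps by (rule valuativeD)
  ultimately have "(\<Sum>(R, a) \<leftarrow> qs. a * f R) = 0" by (rule valuativeD[OF assms(3)])
  then show "(\<Sum>(P, a) \<leftarrow> ps. a * f (g P)) = 0" by (simp add: sum_qs)
qed

lemma valuative_eventually:
  assumes "F \<noteq> bot" "\<And>P. P \<in> \<P> \<Longrightarrow> eventually (\<lambda>e. f P = h e P) F"
    and "\<And>e. valuative \<P> (h e)"
  shows "valuative \<P> (f :: _ \<Rightarrow> int)"
proof (rule valuativeI)
  fix ps
  assume ps: "\<forall>(P, a) \<in> set ps. P \<in> \<P>" "\<And>x. (\<Sum>(P, a) \<leftarrow> ps. a * indicator P x) = (0::int)"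
  have "eventually (\<lambda>e. \<forall>p \<in> set ps. f (fst p) = h e (fst p)) F"
    using ps(1) assms(2) by (intro eventually_ball_finite) auto
  then obtain e where e: "\<forall>p \<in> set ps. f (fst p) = h e (fst p)"
    using eventually_happens' assms(1) by blast
  have "(\<Sum>(P, a) \<leftarrow> ps. a * f P) = (\<Sum>(P, a) \<leftarrow> ps. a * h e P)"
    using e by (intro sum_list_weighted_cong) force
  also have "\<dots> = 0" using assms(3) ps by (rule valuativeD)
  finally show "(\<Sum>(P, a) \<leftarrow> ps. a * f P) = 0" .
qed

lemma valuative_sum_finite_support:
  assumes "\<And>m. valuative \<P> (g m)"
    and "\<And>P. P \<in> \<P> \<Longrightarrow> finite {m. g m P \<noteq> 0}"
    and "\<And>P. P \<in> \<P> \<Longrightarrow> f P = (\<Sum>m \<in> {m. g m P \<noteq> 0}. g m P)"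
  shows "valuative \<P> (f :: _ \<Rightarrow> int)"
proof (rule valuativeI)
  fix ps
  assume ps: "\<forall>(P, a) \<in> set ps. P \<in> \<P>" "\<And>x. (\<Sum>(P, a) \<leftarrow> ps. a * indicator P x) = (0::int)"
  define M where "M = (\<Union>p \<in> set ps. {m. g m (fst p) \<noteq> 0})"
  have M: "finite M" using ps(1) assms(2) by (auto simp: M_def)
  have "f P = (\<Sum>m \<in> M. g m P)" if "(P, a) \<in> set ps" for P a
    unfolding assms(3)[OF bspec[OF ps(1) that, simplified]]
    using M that by (intro sum.mono_neutral_left) (auto simp: M_def)
  then have "(\<Sum>(P, a) \<leftarrow> ps. a * f P) = (\<Sum>(P, a) \<leftarrow> ps. a * (\<Sum>m \<in> M. g m P))"
    by (rule sum_list_weighted_cong)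
  also have "\<dots> = (\<Sum>m \<in> M. \<Sum>(P, a) \<leftarrow> ps. a * g m P)"
    by (induction ps) (auto simp: sum_distrib_left sum.distrib)
  also have "\<dots> = 0" by (intro sum.neutral ballI valuativeD[OF assms(1) ps])
  finally show "(\<Sum>(P, a) \<leftarrow> ps. a * f P) = 0" .
qed

section \<open>Closed intervals\<close>

lemma convex_real_between:
  fixes I :: "real set"
  assumes "convex I" "p \<in> I" "q \<in> I" "p \<le> t" "t \<le> q"
  shows "t \<in> I"
  using assms is_interval_convex_1 is_interval_1 by blast

lemma eventually_indicator_at_bot:
  fixes I :: "real set"
  assumes "closed I" "convex I"
  shows "eventually (\<lambda>t. of_bool (I \<noteq> {} \<and> \<not> bdd_below I) = (indicator I t :: int)) at_bot"
proof (cases "I = {}")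
  case False
  show ?thesis
  proof (cases "bdd_below I")
    case True
    have "eventually (\<lambda>t. t < Inf I) at_bot" by (simp add: eventually_at_bot_dense)
    then show ?thesis
      by (rule eventually_mono) (use True cInf_lower in \<open>fastforce simp: indicator_def\<close>)
  next
    case unbounded: False
    obtain p where p: "p \<in> I" using False by auto
    have below_p: "t \<in> I" if "t \<le> p" for t
    proof -
      obtain q where "q \<in> I" "q < t" using unbounded unfolding bdd_below_def by (meson not_le)
      then show ?thesis using convex_real_between[OF assms(2) _ p] that by auto
    qed
    have "eventually (\<lambda>t. t \<le> p) at_bot" by (rule eventually_le_at_bot)
    then show ?thesis by (rule eventually_mono) (use False unbounded below_p in simp)
  qed
qed simp

lemma eventually_indicator_left_endpoint:
  fixes I :: "real set"
  assumes "closed I" "convex I"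
  shows "eventually (\<lambda>e. of_bool (I \<noteq> {} \<and> bdd_below I \<and> Inf I = m)
           = (indicator I m - indicator I (m - e) :: int)) (at_right 0)"
proof (cases "m \<in> I")
  case mI: True
  show ?thesis
  proof (cases "bdd_below I \<and> Inf I = m")
    case True
    have "m - e \<notin> I" if "e > 0" for e
      using True cInf_lower[of "m - e" I] that by auto
    have "eventually (\<lambda>e. e > 0) (at_right (0::real))" by (rule eventually_at_right_less)
    then show ?thesis by (rule eventually_mono) (use True mI \<open>\<And>e. e > 0 \<Longrightarrow> m - e \<notin> I\<close> in auto)
  next
    case False
    have "\<exists>q \<in> I. q < m"
    proof (cases "bdd_below I")
      case True
      have "Inf I \<in> I" using closed_contains_Inf[OF _ True assms(1)] mI by auto
      moreover have "Inf I < m" using cInf_lower[OF mI True] False True by auto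
      ultimately show ?thesis by blast
    next
      case False
      then show ?thesis unfolding bdd_below_def by (meson not_le)
    qed
    then obtain q where q: "q \<in> I" "q < m" by blast
    have "eventually (\<lambda>e. 0 < e \<and> e < m - q) (at_right (0::real))"
      using q by (auto simp: eventually_at_right_field intro!: exI[of _ "m - q"])
    then show ?thesis
      by (rule eventually_mono) (use False mI convex_real_between[OF assms(2) q(1) mI] in auto)
  qed
next
  case False
  have "((\<lambda>e. m - e) \<longlongrightarrow> m) (at_right 0)" by (auto intro!: tendsto_eq_intros)
  then have "eventually (\<lambda>e. m - e \<in> - I) (at_right 0)"
    using False assms(1) by (intro topological_tendstoD) auto
  moreover have "\<not> (bdd_below I \<and> Inf I = m)" if "I \<noteq> {}"
    using closed_contains_Inf[OF that _ assms(1)] False by auto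
  ultimately show ?thesis using False by (auto elim: eventually_mono)
qed

lemma valuative_nonempty_closed_convex_real:
  "valuative {I :: real set. closed I \<and> convex I} (\<lambda>I. of_bool (I \<noteq> {}) :: int)"
proof -
  let ?\<K> = "{I :: real set. closed I \<and> convex I}"
  have unbounded: "valuative ?\<K> (\<lambda>I. of_bool (I \<noteq> {} \<and> \<not> bdd_below I) :: int)"
    by (rule valuative_eventually[where F = at_bot and h = "\<lambda>t I. indicator I t"])
      (simp_all add: eventually_indicator_at_bot valuative_indicator)
  have left_endpoint: "valuative ?\<K> (\<lambda>I. of_bool (I \<noteq> {} \<and> bdd_below I \<and> Inf I = m) :: int)" for m
    by (rule valuative_eventually[where F = "at_right 0" and h = "\<lambda>e I. indicator I m - indicator I (m - e)"])
      (simp_all add: eventually_indicator_left_endpoint valuative_diff valuative_indicator)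
  have support: "{m. of_bool (I \<noteq> {} \<and> bdd_below I \<and> Inf I = m) \<noteq> (0::int)} =
      (if I \<noteq> {} \<and> bdd_below I then {Inf I} else {})" for I :: "real set"
    by (cases "I \<noteq> {} \<and> bdd_below I") auto
  have bounded: "valuative ?\<K> (\<lambda>I. of_bool (I \<noteq> {} \<and> bdd_below I) :: int)"
    by (rule valuative_sum_finite_support[where g = "\<lambda>m I. of_bool (I \<noteq> {} \<and> bdd_below I \<and> Inf I = m)",
          OF left_endpoint]) (simp_all only: support, auto)
  have "of_bool (I \<noteq> {} \<and> \<not> bdd_below I) + of_bool (I \<noteq> {} \<and> bdd_below I) = (of_bool (I \<noteq> {}) :: int)"
    for I :: "real set"
    by auto
  then show ?thesis using valuative_add[OF unbounded bounded] by simp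
qed

section \<open>Projections of polyhedra\<close>

lemma polyhedron_iff_inequalities:
  fixes P :: "'a::euclidean_space set"
  shows "polyhedron P \<longleftrightarrow> (\<exists>I. finite I \<and> P = {x. \<forall>(a, b) \<in> I. a \<bullet> x \<le> b})"
proof
  assume "polyhedron P"
  then obtain Fs where Fs: "finite Fs" "P = \<Inter>Fs" "\<forall>h \<in> Fs. \<exists>a b. a \<noteq> 0 \<and> h = {x. a \<bullet> x \<le> b}"
    unfolding polyhedron_def by blast
  then obtain A B where AB: "\<And>h. h \<in> Fs \<Longrightarrow> h = {x. A h \<bullet> x \<le> B h}" by metis
  have "P = {x. \<forall>(a, b) \<in> (\<lambda>h. (A h, B h)) ` Fs. a \<bullet> x \<le> b}"
    using Fs(2) AB by auto
  then show "\<exists>I. finite I \<and> P = {x. \<forall>(a, b) \<in> I. a \<bullet> x \<le> b}" using Fs(1) by blast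
next
  assume "\<exists>I. finite I \<and> P = {x. \<forall>(a, b) \<in> I. a \<bullet> x \<le> b}"
  then obtain I where I: "finite I" "P = {x. \<forall>(a, b) \<in> I. a \<bullet> x \<le> b}" by blast
  then have "P = \<Inter>((\<lambda>(a, b). {x. a \<bullet> x \<le> b}) ` I)" by auto
  then show "polyhedron P" using I(1) by (auto simp: polyhedron_halfspace_le)
qed

lemma finite_linear_inequalities_solvable:
  fixes \<alpha> \<beta> :: "'i \<Rightarrow> real"
  assumes "finite I"
  shows "(\<exists>t. \<forall>i \<in> I. \<alpha> i * t \<le> \<beta> i) \<longleftrightarrow>
    (\<forall>i \<in> I. \<alpha> i = 0 \<longrightarrow> 0 \<le> \<beta> i) \<and>
    (\<forall>i \<in> I. \<forall>j \<in> I. 0 < \<alpha> i \<longrightarrow> \<alpha> j < 0 \<longrightarrow> \<alpha> j * \<beta> i \<le> \<alpha> i * \<beta> j)"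
  (is "?solvable \<longleftrightarrow> ?zero \<and> ?pairs")
proof
  assume ?solvable
  then obtain t where t: "\<forall>i \<in> I. \<alpha> i * t \<le> \<beta> i" by blast
  have "\<alpha> j * \<beta> i \<le> \<alpha> i * \<beta> j" if "i \<in> I" "j \<in> I" "0 < \<alpha> i" "\<alpha> j < 0" for i j
  proof -
    have "\<alpha> j * \<beta> i \<le> \<alpha> j * (\<alpha> i * t)" using t that by (intro mult_left_mono_neg) auto
    also have "\<dots> = \<alpha> i * (\<alpha> j * t)" by simp
    also have "\<dots> \<le> \<alpha> i * \<beta> j" using t that by (intro mult_left_mono) auto
    finally show ?thesis .
  qed
  then show "?zero \<and> ?pairs" using t by auto
next
  assume "?zero \<and> ?pairs"
  then have zero: ?zero and pairs: ?pairs by blast+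
  define upper where "upper = (\<lambda>i. \<beta> i / \<alpha> i) ` {i \<in> I. 0 < \<alpha> i}"
  define lower where "lower = (\<lambda>j. \<beta> j / \<alpha> j) ` {j \<in> I. \<alpha> j < 0}"
  have fin: "finite upper" "finite lower" using assms by (auto simp: upper_def lower_def)
  have lower_le_upper: "l \<le> u" if "l \<in> lower" "u \<in> upper" for l u
    using that pairs by (auto simp: upper_def lower_def divide_simps mult.commute)
  define t where "t = (if lower = {} then Min (insert 0 upper) else Max lower)"
  have t_upper: "t \<le> u" if "u \<in> upper" for u
    using that fin lower_le_upper by (auto simp: t_def)
  have t_lower: "l \<le> t" if "l \<in> lower" for l
    using that fin by (auto simp: t_def)
  have "\<alpha> i * t \<le> \<beta> i" if i: "i \<in> I" for i
  proof (cases "\<alpha> i" "0 :: real" rule: linorder_cases)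
    case less
    then show ?thesis using t_lower[of "\<beta> i / \<alpha> i"] i by (auto simp: lower_def neg_divide_le_eq mult.commute)
  next
    case equal
    then show ?thesis using zero i by simp
  next
    case greater
    then show ?thesis using t_upper[of "\<beta> i / \<alpha> i"] i by (auto simp: upper_def pos_le_divide_eq mult.commute)
  qed
  then show ?solvable by blast
qed

lemma polyhedron_plus_line:
  fixes P :: "'a::euclidean_space set"
  assumes "polyhedron P"
  shows "polyhedron {y. \<exists>t. y + t *\<^sub>R d \<in> P}"
proof -
  obtain I where I: "finite I" "P = {x. \<forall>(a, b) \<in> I. a \<bullet> x \<le> b}"
    using assms by (auto simp: polyhedron_iff_inequalities)
  define \<alpha> where "\<alpha> = (\<lambda>(a :: 'a, b :: real). a \<bullet> d)"
  define \<beta> where "\<beta> y = (\<lambda>(a, b :: real). b - a \<bullet> y)" for y :: 'a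
  define combine where "combine = (\<lambda>((a :: 'a, b :: real), (a', b')).
    ((a \<bullet> d) *\<^sub>R a' - (a' \<bullet> d) *\<^sub>R a, (a \<bullet> d) * b' - (a' \<bullet> d) * b))"
  define J where "J = {i \<in> I. \<alpha> i = 0} \<union> combine ` ({i \<in> I. 0 < \<alpha> i} \<times> {j \<in> I. \<alpha> j < 0})"
  have "(\<exists>t. y + t *\<^sub>R d \<in> P) \<longleftrightarrow> (\<forall>(c, e) \<in> J. c \<bullet> y \<le> e)" for y
  proof -
    have "y + t *\<^sub>R d \<in> P \<longleftrightarrow> (\<forall>i \<in> I. \<alpha> i * t \<le> \<beta> y i)" for t
      by (auto simp: I(2) \<alpha>_def \<beta>_def inner_add_right algebra_simps)
    then have "(\<exists>t. y + t *\<^sub>R d \<in> P) \<longleftrightarrow> (\<forall>i \<in> I. \<alpha> i = 0 \<longrightarrow> 0 \<le> \<beta> y i) \<and>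
        (\<forall>i \<in> I. \<forall>j \<in> I. 0 < \<alpha> i \<longrightarrow> \<alpha> j < 0 \<longrightarrow> \<alpha> j * \<beta> y i \<le> \<alpha> i * \<beta> y j)"
      by (simp add: finite_linear_inequalities_solvable[OF I(1)])
    also have "\<dots> \<longleftrightarrow> (\<forall>(c, e) \<in> {i \<in> I. \<alpha> i = 0}. c \<bullet> y \<le> e) \<and>
        (\<forall>p \<in> {i \<in> I. 0 < \<alpha> i} \<times> {j \<in> I. \<alpha> j < 0}. fst (combine p) \<bullet> y \<le> snd (combine p))"
    proof -
      have "\<alpha> j * \<beta> y i \<le> \<alpha> i * \<beta> y j \<longleftrightarrow> fst (combine (i, j)) \<bullet> y \<le> snd (combine (i, j))" for i j
      proof -
        obtain a b a' b' where "i = (a, b)" "j = (a', b')" by fastforce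
        then show ?thesis by (simp add: \<alpha>_def \<beta>_def combine_def inner_diff_left algebra_simps)
      qed
      then show ?thesis by (auto simp: \<alpha>_def \<beta>_def)
    qed
    also have "\<dots> \<longleftrightarrow> (\<forall>(c, e) \<in> J. c \<bullet> y \<le> e)"
      unfolding J_def ball_Un Ball_image_comp by (simp add: case_prod_beta')
    finally show ?thesis .
  qed
  moreover have "finite J" using I(1) by (auto simp: J_def)
  ultimately show ?thesis by (auto simp: polyhedron_iff_inequalities)
qed

lemma plus_span_insert:
  "{y. \<exists>s \<in> span (insert d S). y + s \<in> P} = {y. \<exists>t. y + t *\<^sub>R d \<in> {y. \<exists>s \<in> span S. y + s \<in> P}}"
proof (intro set_eqI iffI; clarsimp)
  fix y s assume s: "s \<in> span (insert d S)" "y + s \<in> P"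
  then obtain k where "s - k *\<^sub>R d \<in> span S" by (auto simp: span_insert)
  then show "\<exists>t. \<exists>s \<in> span S. y + t *\<^sub>R d + s \<in> P"
    using s(2) by (intro exI[of _ k] bexI[of _ "s - k *\<^sub>R d"]) auto
next
  fix y t s assume "s \<in> span S" "y + t *\<^sub>R d + s \<in> P"
  moreover have "t *\<^sub>R d + s \<in> span (insert d S)"
    using \<open>s \<in> span S\<close> by (auto simp: span_insert intro!: exI[of _ t])
  ultimately show "\<exists>s \<in> span (insert d S). y + s \<in> P"
    by (intro bexI[of _ "t *\<^sub>R d + s"]) (auto simp: add.assoc)
qed

lemma polyhedron_plus_span:
  fixes P :: "'a::euclidean_space set"
  assumes "polyhedron P" "finite S"
  shows "polyhedron {y. \<exists>s \<in> span S. y + s \<in> P}"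
  using assms(2)
proof (induction S rule: finite_induct)
  case empty
  then show ?case using assms(1) by simp
next
  case (insert d S)
  then show ?case using polyhedron_plus_line[OF insert.IH, of d] by (simp add: plus_span_insert)
qed

lemma closed_convex_line_preimage:
  fixes C :: "'a::euclidean_space set"
  assumes "closed C" "convex C"
  shows "closed {t :: real. x + t *\<^sub>R d \<in> C}" "convex {t :: real. x + t *\<^sub>R d \<in> C}"
proof -
  have "{t. x + t *\<^sub>R d \<in> C} = (\<lambda>t. x + t *\<^sub>R d) -` C" by auto
  then show "closed {t :: real. x + t *\<^sub>R d \<in> C}"
    using assms(1) by (auto intro!: continuous_closed_vimage continuous_intros)
  show "convex {t :: real. x + t *\<^sub>R d \<in> C}"
  proof (rule convexI; clarsimp)
    fix s t u v :: real
    assume "x + s *\<^sub>R d \<in> C" "x + t *\<^sub>R d \<in> C" "0 \<le> u" "0 \<le> v" "u + v = 1"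
    then have "u *\<^sub>R (x + s *\<^sub>R d) + v *\<^sub>R (x + t *\<^sub>R d) \<in> C" by (rule convexD[OF assms(2)])
    moreover have "u *\<^sub>R (x + s *\<^sub>R d) + v *\<^sub>R (x + t *\<^sub>R d) = x + (u * s + v * t) *\<^sub>R d"
      using \<open>u + v = 1\<close> by (simp add: algebra_simps flip: scaleR_add_left)
    ultimately show "x + (u * s + v * t) *\<^sub>R d \<in> C" by simp
  qed
qed

lemma valuative_polyhedron_meets_translated_span:
  fixes S :: "'a::euclidean_space set"
  assumes "finite S"
  shows "valuative {P. polyhedron P} (\<lambda>P. of_bool (P \<inter> (\<lambda>s. s + x) ` span S \<noteq> {}) :: int)"
  using assms
proof (induction S arbitrary: x rule: finite_induct)
  case empty
  have "of_bool (P \<inter> (\<lambda>s. s + x) ` span {} \<noteq> {}) = (indicator P x :: int)" for P :: "'a set"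
    by (auto simp: indicator_def)
  then show ?case by (simp add: valuative_indicator)
next
  case (insert d S)
  define C where "C P = {y. \<exists>s \<in> span S. y + s \<in> P}" for P :: "'a set"
  define I where "I P = {t. x + t *\<^sub>R d \<in> C P}" for P
  have meets_iff: "P \<inter> (\<lambda>s. s + y) ` span T \<noteq> {} \<longleftrightarrow> y \<in> {y. \<exists>s \<in> span T. y + s \<in> P}" for P y T
    by (auto simp: add.commute)
  have "closed (I P) \<and> convex (I P)" if "polyhedron P" for P
  proof -
    have "polyhedron (C P)" unfolding C_def using that insert.hyps(1) by (rule polyhedron_plus_span)
    then show ?thesis
      unfolding I_def by (intro conjI closed_convex_line_preimage polyhedron_imp_closed polyhedron_imp_convex)
  qed
  then have "I ` {P. polyhedron P} \<subseteq> {I. closed I \<and> convex I}" by blast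
  moreover have "valuative {P. polyhedron P} (\<lambda>P. indicator (I P) t :: int)" for t
  proof -
    have "indicator (I P) t = (of_bool (P \<inter> (\<lambda>s. s + (x + t *\<^sub>R d)) ` span S \<noteq> {}) :: int)" for P
      unfolding meets_iff I_def C_def indicator_def by simp
    then show ?thesis using insert.IH[of "x + t *\<^sub>R d"] by (simp only:)
  qed
  ultimately have "valuative {P. polyhedron P} (\<lambda>P. of_bool (I P \<noteq> {}) :: int)"
    by (rule valuative_comp[OF _ _ valuative_nonempty_closed_convex_real])
  moreover have "I P \<noteq> {} \<longleftrightarrow> P \<inter> (\<lambda>s. s + x) ` span (insert d S) \<noteq> {}" for P
    unfolding meets_iff plus_span_insert I_def C_def by simp
  ultimately show ?case by simp
qed

lemma valuative_polyhedron_meets_affine: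
  fixes A :: "'a::euclidean_space set"
  assumes "affine A"
  shows "valuative {P. polyhedron P} (\<lambda>P. of_bool (P \<inter> A \<noteq> {}) :: int)"
proof (cases "A = {}")
  case True
  then show ?thesis using valuative_const_mult[OF valuative_indicator, of _ 0] by simp
next
  case False
  then obtain a where a: "a \<in> A" by blast
  obtain B where B: "finite B" "span B = (\<lambda>y. y - a) ` A"
    using basis_subspace_exists[OF affine_diffs_subspace_subtract[OF assms a]] by metis
  have "A = (\<lambda>s. s + a) ` span B" by (force simp: B(2) image_image)
  then show ?thesis using valuative_polyhedron_meets_translated_span[OF B(1)] by simp
qed

section \<open>Faces\<close>

definition max_face :: "'a::real_inner set \<Rightarrow> 'a \<Rightarrow> 'a set" where
  "max_face P u = {x \<in> P. \<forall>y \<in> P. u \<bullet> y \<le> u \<bullet> x}"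

definition feasible_directions :: "'a::real_normed_vector set \<Rightarrow> 'a \<Rightarrow> 'a set" where
  "feasible_directions P x = {z. eventually (\<lambda>e. x + e *\<^sub>R z \<in> P) (at_right 0)}"

lemma eventually_at_right_0_linear_le:
  fixes b c w :: real
  shows "\<not> (c < b \<or> c = b \<and> w \<le> 0) \<Longrightarrow> eventually (\<lambda>e. b < c + e * w) (at_right 0)"
    and "eventually (\<lambda>e. c + e * w \<le> b) (at_right 0) \<longleftrightarrow> c < b \<or> c = b \<and> w \<le> 0"
proof -
  have lim: "((\<lambda>e. c + e * w) \<longlongrightarrow> c) (at_right 0)" by (auto intro!: tendsto_eq_intros)
  have pos: "eventually (\<lambda>e. 0 < e) (at_right (0::real))" by (rule eventually_at_right_less)
  show gt: "eventually (\<lambda>e. b < c + e * w) (at_right 0)" if "\<not> (c < b \<or> c = b \<and> w \<le> 0)"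
  proof (cases "c = b")
    case True
    then show ?thesis using that pos by (auto elim!: eventually_mono)
  next
    case False
    then show ?thesis using that order_tendstoD(1)[OF lim] by auto
  qed
  show "eventually (\<lambda>e. c + e * w \<le> b) (at_right 0) \<longleftrightarrow> c < b \<or> c = b \<and> w \<le> 0"
  proof
    assume "eventually (\<lambda>e. c + e * w \<le> b) (at_right 0)"
    then show "c < b \<or> c = b \<and> w \<le> 0"
      using gt eventually_happens'[OF trivial_limit_at_right_real eventually_conj] by force
  next
    assume "c < b \<or> c = b \<and> w \<le> 0"
    then show "eventually (\<lambda>e. c + e * w \<le> b) (at_right 0)"
    proof
      assume "c < b"
      then show ?thesis using order_tendstoD(2)[OF lim \<open>c < b\<close>] by (auto elim: eventually_mono)
    next
      assume "c = b \<and> w \<le> 0"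
      then show ?thesis using pos by (auto elim!: eventually_mono simp: mult_nonneg_nonpos)
    qed
  qed
qed

lemma feasible_directions_inequalities:
  fixes P :: "'a::euclidean_space set"
  assumes "finite I" "P = {x. \<forall>(a, b) \<in> I. a \<bullet> x \<le> b}"
  shows "feasible_directions P x = {z. \<forall>(a, b) \<in> I. a \<bullet> x < b \<or> a \<bullet> x = b \<and> a \<bullet> z \<le> 0}"
proof -
  have "x + e *\<^sub>R z \<in> P \<longleftrightarrow> (\<forall>(a, b) \<in> I. a \<bullet> x + e * (a \<bullet> z) \<le> b)" for e z
    by (simp add: assms(2) inner_add_right)
  then show ?thesis
    by (simp add: feasible_directions_def eventually_ball_finite_distrib[OF assms(1)] case_prod_unfold
        eventually_at_right_0_linear_le(2))
qed

lemma polyhedron_feasible_directions: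
  fixes P :: "'a::euclidean_space set"
  assumes "polyhedron P"
  shows "polyhedron (feasible_directions P x)"
proof -
  obtain I where I: "finite I" "P = {x. \<forall>(a, b) \<in> I. a \<bullet> x \<le> b}"
    using assms by (auto simp: polyhedron_iff_inequalities)
  have "polyhedron {z. a \<bullet> x < b \<or> a \<bullet> x = b \<and> a \<bullet> z \<le> 0}" for a :: 'a and b
    by (cases "a \<bullet> x" b rule: linorder_cases) (simp_all add: polyhedron_halfspace_le)
  moreover have "feasible_directions P x = (\<Inter>(a, b) \<in> I. {z. a \<bullet> x < b \<or> a \<bullet> x = b \<and> a \<bullet> z \<le> 0})"
    by (auto simp: feasible_directions_inequalities[OF I])
  ultimately show ?thesis using I(1) by (auto intro!: polyhedron_Inter)
qed

lemma eventually_mem_iff_feasible_direction: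
  fixes P :: "'a::euclidean_space set"
  assumes "polyhedron P"
  shows "eventually (\<lambda>e. x + e *\<^sub>R z \<in> P \<longleftrightarrow> z \<in> feasible_directions P x) (at_right 0)"
proof (cases "z \<in> feasible_directions P x")
  case True
  then show ?thesis by (auto simp: feasible_directions_def elim: eventually_mono)
next
  case False
  obtain I where I: "finite I" "P = {x. \<forall>(a, b) \<in> I. a \<bullet> x \<le> b}"
    using assms by (auto simp: polyhedron_iff_inequalities)
  then obtain a b where ab: "(a, b) \<in> I" "\<not> (a \<bullet> x < b \<or> a \<bullet> x = b \<and> a \<bullet> z \<le> 0)"
    using False by (auto simp: feasible_directions_inequalities)
  have "eventually (\<lambda>e. b < a \<bullet> x + e * (a \<bullet> z)) (at_right 0)"
    using ab(2) by (rule eventually_at_right_0_linear_le(1))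
  then have "eventually (\<lambda>e. x + e *\<^sub>R z \<notin> P) (at_right 0)"
    by (rule eventually_mono) (use ab(1) in \<open>force simp: I(2) inner_add_right\<close>)
  then show ?thesis using False by simp
qed


lemma feasible_directions_outside:
  fixes P :: "'a::real_normed_vector set"
  assumes "closed P" "x \<notin> P"
  shows "feasible_directions P x = {}"
proof (rule ccontr)
  assume "feasible_directions P x \<noteq> {}"
  then obtain z where z: "eventually (\<lambda>e. x + e *\<^sub>R z \<in> P) (at_right 0)"
    by (auto simp: feasible_directions_def)
  have "((\<lambda>e. x + e *\<^sub>R z) \<longlongrightarrow> x + 0 *\<^sub>R z) (at_right 0)" by (intro tendsto_intros)
  then have "x \<in> P" using Lim_in_closed_set[OF assms(1) z trivial_limit_at_right_real] by simp
  with assms(2) show False by simp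
qed

lemma mem_max_face_iff_feasible_directions:
  fixes P :: "'a::real_inner set"
  assumes "convex P" "x \<in> P"
  shows "x \<in> max_face P u \<longleftrightarrow> feasible_directions P x \<inter> {z. 1 \<le> u \<bullet> z} = {}"
proof
  assume x: "x \<in> max_face P u"
  show "feasible_directions P x \<inter> {z. 1 \<le> u \<bullet> z} = {}"
  proof (rule ccontr)
    assume "\<not> ?thesis"
    then obtain z where z: "eventually (\<lambda>e. x + e *\<^sub>R z \<in> P) (at_right 0)" "1 \<le> u \<bullet> z"
      by (auto simp: feasible_directions_def)
    obtain e where e: "x + e *\<^sub>R z \<in> P" "0 < e"
      using eventually_happens'[OF trivial_limit_at_right_real eventually_conj[OF z(1) eventually_at_right_less]]
      by blast
    have "u \<bullet> (x + e *\<^sub>R z) \<le> u \<bullet> x" using x e(1) by (simp add: max_face_def)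
    moreover have "0 < e * (u \<bullet> z)" using e(2) z(2) by simp
    ultimately show False by (simp add: inner_add_right)
  qed
next
  assume none: "feasible_directions P x \<inter> {z. 1 \<le> u \<bullet> z} = {}"
  show "x \<in> max_face P u"
  proof (rule ccontr)
    assume "x \<notin> max_face P u"
    then obtain y where y: "y \<in> P" "u \<bullet> x < u \<bullet> y" using assms(2) by (auto simp: max_face_def not_le)
    define c where "c = u \<bullet> (y - x)"
    have c: "0 < c" using y(2) by (simp add: c_def inner_diff_right)
    define z where "z = (1 / c) *\<^sub>R (y - x)"
    have "x + e *\<^sub>R z \<in> P" if "0 < e" "e < c" for e
    proof -
      have "x + e *\<^sub>R z = (1 - e / c) *\<^sub>R x + (e / c) *\<^sub>R y"
        using c by (simp add: z_def algebra_simps)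
      also have "\<dots> \<in> P" using that c by (intro convexD[OF assms(1) assms(2) y(1)]) auto
      finally show ?thesis .
    qed
    then have "z \<in> feasible_directions P x"
      unfolding feasible_directions_def eventually_at_right_field using c by blast
    moreover have "u \<bullet> z = 1" using c by (simp add: z_def c_def)
    ultimately show False using none by auto
  qed
qed

lemma indicator_max_face:
  fixes P :: "'a::euclidean_space set"
  assumes "closed P" "convex P"
  shows "(indicator (max_face P u) x :: int) =
    indicator P x - of_bool (feasible_directions P x \<inter> {z. 1 \<le> u \<bullet> z} \<noteq> {})"
proof (cases "x \<in> P")
  case True
  then show ?thesis using mem_max_face_iff_feasible_directions[OF assms(2) True, of u] by simp
next
  case False
  moreover have "max_face P u \<subseteq> P" by (auto simp: max_face_def)
  ultimately show ?thesis using feasible_directions_outside[OF assms(1) False] by (auto simp: indicator_def)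
qed

lemma valuative_indicator_feasible_directions:
  "valuative {P :: 'a::euclidean_space set. polyhedron P} (\<lambda>P. indicator (feasible_directions P x) z :: int)"
proof (rule valuative_eventually[where h = "\<lambda>e P. indicator P (x + e *\<^sub>R z)"])
  fix P :: "'a set" assume "P \<in> {P. polyhedron P}"
  then show "eventually (\<lambda>e. indicator (feasible_directions P x) z = (indicator P (x + e *\<^sub>R z) :: int))
      (at_right 0)"
    by (auto simp: indicator_def elim!: eventually_mono[OF eventually_mem_iff_feasible_direction])
qed (simp_all add: valuative_indicator)

lemma valuative_indicator_max_face:
  "valuative {P :: 'a::euclidean_space set. polyhedron P} (\<lambda>P. indicator (max_face P u) x :: int)"
proof -
  define H where "H = {z :: 'a. 1 \<le> u \<bullet> z}"
  have "(\<lambda>P. feasible_directions P x \<inter> H) ` {P. polyhedron P} \<subseteq> {P. polyhedron P}"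
    by (auto simp: H_def polyhedron_feasible_directions polyhedron_halfspace_ge)
  moreover have "valuative {P. polyhedron P} (\<lambda>P. indicator (feasible_directions P x \<inter> H) z :: int)" for z
    using valuative_const_mult[OF valuative_indicator_feasible_directions, of "indicator H z" x z]
    by (simp add: indicator_inter_arith mult.commute)
  moreover have "valuative {P :: 'a set. polyhedron P} (\<lambda>P. of_bool (P \<noteq> {}) :: int)"
    using valuative_polyhedron_meets_affine[OF affine_UNIV] by simp
  ultimately have "valuative {P. polyhedron P} (\<lambda>P. of_bool (feasible_directions P x \<inter> H \<noteq> {}) :: int)"
    by (rule valuative_comp)
  then have "valuative {P. polyhedron P}
      (\<lambda>P. indicator P x - of_bool (feasible_directions P x \<inter> H \<noteq> {}) :: int)"
    by (rule valuative_diff[OF valuative_indicator])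
  then show ?thesis
    by (rule iffD2[OF valuative_cong, rotated])
      (simp add: H_def indicator_max_face polyhedron_imp_closed polyhedron_imp_convex)
qed

section \<open>Tangent cones and extended deformations\<close>

lemma lineal_convex_cone:
  assumes "convex_cone C"
  shows "lineal C = {x \<in> C. - x \<in> C}" and "subspace (lineal C)"
proof -
  let ?L = "{x \<in> C. - x \<in> C}"
  have scale: "c *\<^sub>R x \<in> ?L" if "x \<in> ?L" for c x
  proof (cases "0 \<le> c")
    case True
    then show ?thesis using that convex_cone_scaleR[OF assms, of c] by (auto simp flip: scaleR_minus_right)
  next
    case False
    then have "(- c) *\<^sub>R (- x) \<in> C" "(- c) *\<^sub>R x \<in> C"
      using that by (auto intro!: convex_cone_scaleR[OF assms] simp del: scaleR_minus_left scaleR_minus_right)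
    then show ?thesis by simp
  qed
  have subspace: "subspace ?L"
    unfolding subspace_def
  proof (intro conjI ballI allI)
    show "0 \<in> ?L" using convex_cone_contains_0[OF assms] by simp
  next
    fix x y assume "x \<in> ?L" "y \<in> ?L"
    then show "x + y \<in> ?L" using convex_cone_add[OF assms, of x y] convex_cone_add[OF assms, of "- x" "- y"] by simp
  qed (rule scale)
  have maximal: "M \<subseteq> ?L" if "subspace M" "M \<subseteq> C" for M
    using that subspace_neg[OF that(1)] by auto
  show eq: "lineal C = ?L"
    unfolding lineal_def using subspace maximal by (intro the_equality) blast+
  show "subspace (lineal C)" using subspace by (simp add: eq)
qed

lemma mem_normal_cone_iff: "u \<in> normal_cone Q F \<longleftrightarrow> max_face Q u = F"
  by (simp add: normal_cone_def max_face_def)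

lemma max_face_face_of:
  fixes P :: "'a::real_inner set"
  assumes "convex P"
  shows "max_face P u face_of P"
proof (cases "max_face P u = {}")
  case False
  then obtain g where g: "g \<in> max_face P u" by blast
  then have "max_face P u = P \<inter> {x. u \<bullet> x = u \<bullet> g}"
    by (auto simp: max_face_def intro: order.antisym)
  also have "\<dots> face_of P"
    using g by (intro face_of_Int_supporting_hyperplane_le assms) (auto simp: max_face_def)
  finally show ?thesis .
qed simp

lemma polyhedron_max_face:
  fixes P :: "'a::euclidean_space set"
  assumes "polyhedron P"
  shows "polyhedron (max_face P u)"
proof (cases "max_face P u = {}")
  case False
  then obtain g where "g \<in> max_face P u" by blast
  then have "max_face P u = P \<inter> {x. u \<bullet> x \<ge> u \<bullet> g}" by (auto simp: max_face_def)
  then show ?thesis using assms polyhedron_halfspace_ge by auto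
qed simp

lemma normal_cone_nonempty:
  fixes Q :: "'a::euclidean_space set"
  assumes "polyhedron Q" "F face_of Q" "F \<noteq> {}"
  shows "normal_cone Q F \<noteq> {}"
proof -
  obtain a b where ab: "Q \<subseteq> {x. a \<bullet> x \<le> b}" "F = Q \<inter> {x. a \<bullet> x = b}"
    using exposed_face_of_polyhedron[OF assms(1)] assms(2) unfolding exposed_face_of_def by blast
  obtain f where f: "f \<in> F" using assms(3) by blast
  have "max_face Q a = F" using ab f by (fastforce simp: max_face_def)
  then show ?thesis by (auto simp: mem_normal_cone_iff)
qed

lemma max_face_add_supporting:
  fixes Q :: "'a::real_inner set"
  assumes "Q \<subseteq> {x. a \<bullet> x \<le> b}" "max_face Q u \<subseteq> {x. a \<bullet> x = b}" "max_face Q u \<noteq> {}" "0 \<le> t"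
  shows "max_face Q (u + t *\<^sub>R a) = max_face Q u"
proof (intro set_eqI iffI)
  fix x assume x: "x \<in> max_face Q u"
  have "u \<bullet> y + t * (a \<bullet> y) \<le> u \<bullet> x + t * (a \<bullet> x)" if "y \<in> Q" for y
    using x that assms by (intro add_mono mult_left_mono) (auto simp: max_face_def)
  then show "x \<in> max_face Q (u + t *\<^sub>R a)" using x by (simp add: max_face_def inner_add_left)
next
  fix x assume x: "x \<in> max_face Q (u + t *\<^sub>R a)"
  obtain f where f: "f \<in> max_face Q u" using assms(3) by blast
  have "u \<bullet> f + t * (a \<bullet> f) \<le> u \<bullet> x + t * (a \<bullet> x)"
    using x f by (auto simp: max_face_def inner_add_left)
  moreover have "t * (a \<bullet> x) \<le> t * (a \<bullet> f)"
    using x f assms by (intro mult_left_mono) (auto simp: max_face_def)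
  ultimately have "u \<bullet> f \<le> u \<bullet> x" by linarith
  then show "x \<in> max_face Q u" using x f by (auto simp: max_face_def intro: order_trans)
qed

lemma tangent_cone_subset_polar_normal_cone:
  "tangent_cone Q F \<subseteq> {z. \<forall>u \<in> normal_cone Q F. u \<bullet> z \<le> 0}"
  unfolding tangent_cone_def
proof (rule hull_minimal)
  show "{v' - v | v v'. v \<in> F \<and> v' \<in> Q} \<subseteq> {z. \<forall>u \<in> normal_cone Q F. u \<bullet> z \<le> 0}"
    by (auto simp: mem_normal_cone_iff max_face_def inner_diff_right)
  show "convex_cone {z. \<forall>u \<in> normal_cone Q F. u \<bullet> z \<le> 0}"
    by (auto simp: convex_cone_iff inner_add_right mult_nonneg_nonpos add_nonpos_nonpos)
qed

lemma feasible_direction_in_tangent_cone: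
  assumes "f \<in> F" "z \<in> feasible_directions Q f"
  shows "z \<in> tangent_cone Q F"
proof -
  obtain e where e: "f + e *\<^sub>R z \<in> Q" "0 < e"
    using eventually_happens'[OF trivial_limit_at_right_real
        eventually_conj[OF assms(2)[unfolded feasible_directions_def, simplified] eventually_at_right_less]]
    by blast
  have "(f + e *\<^sub>R z) - f \<in> tangent_cone Q F"
    unfolding tangent_cone_def using e(1) assms(1) by (intro hull_inc) blast
  then have "(1 / e) *\<^sub>R ((f + e *\<^sub>R z) - f) \<in> tangent_cone Q F"
    unfolding tangent_cone_def using e(2) by (intro convex_cone_hull_mul) auto
  then show ?thesis using e(2) by simp
qed

lemma face_subset_tight_hyperplane:
  fixes Q :: "'a::euclidean_space set"
  assumes "F face_of Q" "convex Q" "Q \<subseteq> {x. a \<bullet> x \<le> b}" "f \<in> rel_interior F" "a \<bullet> f = b"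
  shows "F \<subseteq> {x. a \<bullet> x = b}"
proof -
  have "(Q \<inter> {x. a \<bullet> x = b}) face_of Q"
    using assms(2,3) by (intro face_of_Int_supporting_hyperplane_le) auto
  moreover have "f \<in> Q" using assms(1,4) rel_interior_subset face_of_imp_subset by blast
  ultimately have "F \<subseteq> Q \<inter> {x. a \<bullet> x = b}"
    using assms(4,5) by (intro subset_of_face_of[OF _ face_of_imp_subset[OF assms(1)]]) auto
  then show ?thesis by blast
qed

lemma polar_normal_cone_subset_tangent_cone:
  fixes Q :: "'a::euclidean_space set"
  assumes "polyhedron Q" "F face_of Q" "F \<noteq> {}"
  shows "{z. \<forall>u \<in> normal_cone Q F. u \<bullet> z \<le> 0} \<subseteq> tangent_cone Q F"
proof
  fix z assume z: "z \<in> {z. \<forall>u \<in> normal_cone Q F. u \<bullet> z \<le> 0}"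
  obtain u0 where "u0 \<in> normal_cone Q F" using normal_cone_nonempty[OF assms] by blast
  then have u0: "max_face Q u0 = F" by (simp add: mem_normal_cone_iff)
  obtain f where f: "f \<in> rel_interior F"
    using rel_interior_eq_empty face_of_imp_convex[OF assms(2)] assms(3) by blast
  have fQ: "f \<in> Q" using f rel_interior_subset face_of_imp_subset[OF assms(2)] by blast
  obtain I where I: "finite I" "Q = {x. \<forall>(a, b) \<in> I. a \<bullet> x \<le> b}"
    using assms(1) by (auto simp: polyhedron_iff_inequalities)
  have "a \<bullet> z \<le> 0" if ab: "(a, b) \<in> I" "a \<bullet> f = b" for a b
  proof (rule ccontr)
    assume "\<not> a \<bullet> z \<le> 0"
    have Q_sub: "Q \<subseteq> {x. a \<bullet> x \<le> b}" using ab(1) I(2) by auto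
    have "F \<subseteq> {x. a \<bullet> x = b}"
      using face_subset_tight_hyperplane[OF assms(2) polyhedron_imp_convex[OF assms(1)] Q_sub f ab(2)] .
    then have "u0 + t *\<^sub>R a \<in> normal_cone Q F" if "0 \<le> t" for t
      using max_face_add_supporting[OF Q_sub _ _ that, of u0] u0 assms(3) by (simp add: mem_normal_cone_iff)
    then have "(u0 + t *\<^sub>R a) \<bullet> z \<le> 0" if "0 \<le> t" for t using z that by blast
    from this[of "(\<bar>u0 \<bullet> z\<bar> + 1) / (a \<bullet> z)"] \<open>\<not> a \<bullet> z \<le> 0\<close> show False
      by (simp add: inner_add_left)
  qed
  then have "\<forall>(a, b) \<in> I. a \<bullet> f < b \<or> a \<bullet> f = b \<and> a \<bullet> z \<le> 0"
    using fQ I(2) by fastforce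
  then have "z \<in> feasible_directions Q f" by (simp add: feasible_directions_inequalities[OF I])
  then show "z \<in> tangent_cone Q F"
    using f rel_interior_subset by (blast intro: feasible_direction_in_tangent_cone)
qed

lemma tangent_cone_eq_polar_normal_cone:
  fixes Q :: "'a::euclidean_space set"
  assumes "polyhedron Q" "F face_of Q" "F \<noteq> {}"
  shows "tangent_cone Q F = {z. \<forall>u \<in> normal_cone Q F. u \<bullet> z \<le> 0}"
  using tangent_cone_subset_polar_normal_cone polar_normal_cone_subset_tangent_cone[OF assms] by blast

text \<open>Normal cones of distinct faces of \<open>Q\<close> are disjoint, so the cone of \<open>\<Sigma>\<^sub>P\<close> containing \<open>u\<^sub>0\<close>
  contains all of \<open>\<sigma>\<^sub>F\<close>. This is the only place where extended deformations enter.\<close>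

lemma max_face_ext_deformation:
  fixes Q P :: "'a::euclidean_space set"
  assumes P: "P \<in> ext_deformations Q" and u0: "u0 \<in> normal_cone Q F" and u: "u \<in> normal_cone Q F"
    and ne: "max_face P u0 \<noteq> {}"
  shows "max_face P u = max_face P u0"
proof -
  have "max_face P u0 face_of P"
    using P by (intro max_face_face_of polyhedron_imp_convex) (simp add: ext_deformations_def)
  then have "normal_cone P (max_face P u0) \<in> normal_fan P" using ne by (auto simp: normal_fan_def)
  then obtain S where S: "S \<subseteq> normal_fan Q" "normal_cone P (max_face P u0) = \<Union>S"
    using P unfolding ext_deformations_def by blast
  have "u0 \<in> normal_cone P (max_face P u0)" by (simp add: mem_normal_cone_iff)
  then obtain \<sigma> where \<sigma>: "\<sigma> \<in> S" "u0 \<in> \<sigma>" using S(2) by auto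
  then obtain G where G: "\<sigma> = normal_cone Q G" using S(1) by (auto simp: normal_fan_def)
  have "G = F" using \<sigma>(2) u0 by (simp add: G mem_normal_cone_iff)
  then have "u \<in> normal_cone P (max_face P u0)" using u \<sigma>(1) S(2) G by auto
  then show ?thesis by (simp add: mem_normal_cone_iff)
qed

lemma tightly_contains_tangent_cone_iff:
  fixes Q P :: "'a::euclidean_space set"
  assumes Q: "polyhedron Q" "F face_of Q" "F \<noteq> {}"
    and u0: "u0 \<in> normal_cone Q F" and P: "P \<in> ext_deformations Q"
  shows "tightly_contains (tangent_cone Q F) v P \<longleftrightarrow>
    max_face P u0 \<inter> (\<lambda>x. x + v) ` lineal (tangent_cone Q F) \<noteq> {}"
proof -
  define N where "N = normal_cone Q F"
  have C: "tangent_cone Q F = {z. \<forall>u \<in> N. u \<bullet> z \<le> 0}"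
    unfolding N_def by (rule tangent_cone_eq_polar_normal_cone[OF Q])
  have "lineal (tangent_cone Q F) = {z. \<forall>u \<in> N. u \<bullet> z \<le> 0 \<and> - (u \<bullet> z) \<le> 0}"
    using lineal_convex_cone[of "tangent_cone Q F"]
    by (auto simp: tangent_cone_def convex_cone_convex_cone_hull) (auto simp: C[unfolded tangent_cone_def])
  then have L: "lineal (tangent_cone Q F) = {z. \<forall>u \<in> N. u \<bullet> z = 0}" by force
  show ?thesis
  proof
    assume "tightly_contains (tangent_cone Q F) v P"
    then obtain l where l: "l \<in> lineal (tangent_cone Q F)" "l + v \<in> P"
      and sub: "P \<subseteq> (\<lambda>x. x + v) ` tangent_cone Q F"
      by (auto simp: tightly_contains_def)
    have "u0 \<bullet> y \<le> u0 \<bullet> (l + v)" if y: "y \<in> P" for y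
    proof -
      obtain c where "c \<in> tangent_cone Q F" "y = c + v" using sub y by blast
      then have "y = c + v" "u0 \<bullet> c \<le> 0" using u0 by (auto simp: C N_def)
      moreover have "u0 \<bullet> l = 0" using l(1) u0 by (simp add: L N_def)
      ultimately show ?thesis by (simp add: inner_add_right)
    qed
    then have "l + v \<in> max_face P u0" using l(2) by (simp add: max_face_def)
    then show "max_face P u0 \<inter> (\<lambda>x. x + v) ` lineal (tangent_cone Q F) \<noteq> {}" using l(1) by blast
  next
    assume "max_face P u0 \<inter> (\<lambda>x. x + v) ` lineal (tangent_cone Q F) \<noteq> {}"
    then obtain l where l: "l \<in> lineal (tangent_cone Q F)" "l + v \<in> max_face P u0" by blast
    have "y - v \<in> tangent_cone Q F" if y: "y \<in> P" for y
    proof -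
      have "u \<bullet> (y - v) \<le> 0" if u: "u \<in> N" for u
      proof -
        have "l + v \<in> max_face P u"
          using max_face_ext_deformation[OF P u0 u[unfolded N_def]] l(2) by auto
        then have "u \<bullet> y \<le> u \<bullet> (l + v)" using y by (simp add: max_face_def)
        moreover have "u \<bullet> l = 0" using l(1) u by (simp add: L)
        ultimately show ?thesis by (simp add: inner_diff_right inner_add_right)
      qed
      then show ?thesis by (simp add: C)
    qed
    then have "P \<subseteq> (\<lambda>x. x + v) ` tangent_cone Q F"
      by (auto intro!: image_eqI[where x = "_ - v"])
    moreover have "l + v \<in> P" using l(2) by (simp add: max_face_def)
    ultimately show "tightly_contains (tangent_cone Q F) v P"
      using l(1) by (auto simp: tightly_contains_def)
  qed
qed

theorem theorem2p1:
  fixes Q F :: "'a::euclidean_space set" and v :: 'a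
  assumes "polyhedron Q" and "F face_of Q" and "F \<noteq> {}"
  shows "valuative (ext_deformations Q)
           (\<lambda>P. if tightly_contains (tangent_cone Q F) v P then (1::int) else 0)"
proof -
  obtain u0 where u0: "u0 \<in> normal_cone Q F" using normal_cone_nonempty[OF assms] by blast
  define A where "A = (\<lambda>x. x + v) ` lineal (tangent_cone Q F)"
  have "subspace (lineal (tangent_cone Q F))"
    by (simp add: lineal_convex_cone(2) tangent_cone_def convex_cone_convex_cone_hull)
  then have "affine A"
    unfolding A_def using affine_translation[of _ v] subspace_imp_affine by (simp add: add.commute)
  then have "valuative {P. polyhedron P} (\<lambda>P. of_bool (max_face P u0 \<inter> A \<noteq> {}) :: int)"
    by (intro valuative_comp[OF _ valuative_indicator_max_face valuative_polyhedron_meets_affine])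
      (auto simp: polyhedron_max_face)
  then have "valuative (ext_deformations Q) (\<lambda>P. of_bool (max_face P u0 \<inter> A \<noteq> {}) :: int)"
    by (rule valuative_subset) (auto simp: ext_deformations_def)
  then show ?thesis
    by (rule iffD1[OF valuative_cong, rotated])
      (simp add: tightly_contains_tangent_cone_iff[OF assms u0] A_def)
qed

end
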